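(* If $f:[a,b]\to\mathbb F$ is $g$-continuous at $t\in[a,b]$, then the function $f^*:[a,b]\to\mathbb F$, $f^*(s)=f(s^* )$, is also $g$-continuous at $t$.
   Context: Let $g:\mathbb R\to\mathbb R$ be nondecreasing and left-continuous, $\mathbb F\in\{\mathbb R,\mathbb C\}$. $\Delta g(t)=g(t^+)-g(t)$, $D_g=\{t:\Delta g(t)>0\}$, $C_g=\{t: g\text{ constant on }(t-\varepsilon,t+\varepsilon)\text{ for some }\varepsilon>0\}=\bigcup_{n\in\Lambda}(a_n,b_n)$ (disjoint union of connected components), $N_g^-=\{a_n\}\setminus D_g$, $N_g^+=\{b_n\}\setminus D_g$. Fix $a<b$ with $a\notin N_g^-\cup D_g$, $b\notin D_g\cup C_g\cup N_g^+$. For $s\in[a,b]$, $s^*=s$ if $s\notin C_g$ and $s^*=b_n$ if $s\in(a_n,b_n)$. A function $u:D\subset\mathbb R\to\mathbb F$ is $g$-continuous at $t\in D$ if for every $\varepsilon>0$ there is $\delta>0$ with $|u(t)-u(s)|<\varepsilon$ for all $s\in D$ with $|g(t)-g(s)|<\delta$. *)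

theory Defs
  imports "HOL-Analysis.Analysis"
begin

definition jump :: "(real \<Rightarrow> real) \<Rightarrow> real \<Rightarrow> real" where
  "jump g t = Lim (at_right t) g - g t"

definition Dg :: "(real \<Rightarrow> real) \<Rightarrow> real set" where
  "Dg g = {t. jump g t > 0}"

definition Cg :: "(real \<Rightarrow> real) \<Rightarrow> real set" where
  "Cg g = {t. \<exists>e>0. \<forall>s. \<bar>s - t\<bar> < e \<longrightarrow> g s = g t}"

definition left_ends :: "(real \<Rightarrow> real) \<Rightarrow> real set" where
  "left_ends g = {Inf K | K. K \<in> components (Cg g) \<and> bdd_below K}"

definition right_ends :: "(real \<Rightarrow> real) \<Rightarrow> real set" where
  "right_ends g = {Sup K | K. K \<in> components (Cg g) \<and> bdd_above K}"

definition Ng_minus :: "(real \<Rightarrow> real) \<Rightarrow> real set" where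
  "Ng_minus g = left_ends g - Dg g"

definition Ng_plus :: "(real \<Rightarrow> real) \<Rightarrow> real set" where
  "Ng_plus g = right_ends g - Dg g"

definition gstar :: "(real \<Rightarrow> real) \<Rightarrow> real \<Rightarrow> real" where
  "gstar g s = (if s \<in> Cg g then Sup (connected_component_set (Cg g) s) else s)"

definition g_continuous_at :: "(real \<Rightarrow> real) \<Rightarrow> real set \<Rightarrow> (real \<Rightarrow> 'a::real_normed_vector) \<Rightarrow> real \<Rightarrow> bool" where
  "g_continuous_at g D u t \<longleftrightarrow> t \<in> D \<and>
     (\<forall>e>0. \<exists>d>0. \<forall>s\<in>D. \<bar>g t - g s\<bar> < d \<longrightarrow> norm (u t - u s) < e)"

end

theory Submission
  imports Defs
begin

text \<open>
  The map \<open>s \<mapsto> s\<^sup>*\<close> sends \<open>[a,b]\<close> into itself and does not change \<open>g\<close>: on a component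
  \<open>(a\<^sub>n,b\<^sub>n)\<close> of \<open>C\<^sub>g\<close> the function \<open>g\<close> is constant, and left continuity carries this value
  to \<open>b\<^sub>n\<close>; and \<open>b \<notin> C\<^sub>g\<close> makes every component meeting \<open>[a,b]\<close> end at or before \<open>b\<close>.
  Since \<open>g\<close>-continuity only sees the values of \<open>g\<close>, precomposing with any such
  \<open>g\<close>-preserving self-map of the domain keeps \<open>g\<close>-continuity.
\<close>

lemma Cg_iff_eventually_nhds: "t \<in> Cg g \<longleftrightarrow> (\<forall>\<^sub>F s in nhds t. g s = g t)"
  by (simp add: Cg_def eventually_nhds_metric dist_real_def)

lemma open_Cg: "open (Cg g)"
proof (subst open_subopen, intro ballI)
  fix t
  assume "t \<in> Cg g"
  then obtain S where S: "open S" "t \<in> S" "\<forall>s\<in>S. g s = g t"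
    by (auto simp: Cg_iff_eventually_nhds eventually_nhds)
  have "S \<subseteq> Cg g"
  proof
    fix y
    assume "y \<in> S"
    then show "y \<in> Cg g"
      unfolding Cg_iff_eventually_nhds eventually_nhds using S by metis
  qed
  with S show "\<exists>T. open T \<and> t \<in> T \<and> T \<subseteq> Cg g"
    by blast
qed

lemma Cg_component_const:
  assumes "x \<in> connected_component_set (Cg g) s"
  shows "g x = g s"
proof -
  let ?K = "connected_component_set (Cg g) s"
  have "s \<in> ?K"
    using assms by (simp add: connected_component_in)
  moreover have "\<forall>y\<in>?K. \<forall>\<^sub>F z in at y within ?K. g y = g z"
  proof
    fix y
    assume "y \<in> ?K"
    then have "\<forall>\<^sub>F z in nhds y. g z = g y"
      using connected_component_subset Cg_iff_eventually_nhds by blast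
    then show "\<forall>\<^sub>F z in at y within ?K. g y = g z"
      by (rule eventually_mono[OF filter_leD[OF at_within_le_nhds]]) simp_all
  qed
  ultimately have "g s = g x"
    by (rule connected_local_const[OF connected_connected_component _ assms])
  then show ?thesis
    by simp
qed

lemma is_interval_connected_component_set: "is_interval (connected_component_set (S :: real set) x)"
  by (simp add: is_interval_connected_1)

lemma component_Cg_less:
  assumes "s \<le> b" and "b \<notin> Cg g" and x: "x \<in> connected_component_set (Cg g) s"
  shows "x < b"
proof (rule ccontr)
  assume "\<not> x < b"
  moreover have "s \<in> connected_component_set (Cg g) s"
    using x by (simp add: connected_component_in)
  ultimately have "b \<in> connected_component_set (Cg g) s"
    using is_interval_connected_component_set[of "Cg g" s, unfolded is_interval_1, rule_format, of s x b] x assms(1)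
    by simp
  with assms(2) show False
    using connected_component_subset by blast
qed

lemma eventually_at_left_gstar:
  assumes s: "s \<in> Cg g" and bdd: "bdd_above (connected_component_set (Cg g) s)"
  shows "s < gstar g s" and "\<forall>\<^sub>F x in at_left (gstar g s). g x = g s"
proof -
  define K where "K = connected_component_set (Cg g) s"
  have c: "gstar g s = Sup K"
    using s by (simp add: gstar_def K_def)
  have sK: "s \<in> K"
    using s by (simp add: K_def)
  have "open K"
    unfolding K_def by (rule open_connected_component[OF open_Cg])
  then obtain e where "e > 0" "ball s e \<subseteq> K"
    using sK open_contains_ball by blast
  then have "s + e / 2 \<in> K"
    by (auto simp: dist_real_def)
  then have "s + e / 2 \<le> Sup K"
    using bdd unfolding K_def by (rule cSup_upper)
  with \<open>e > 0\<close> show sc: "s < gstar g s"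
    unfolding c by linarith
  have "g x = g s" if "s < x" "x < Sup K" for x
  proof -
    obtain y where "y \<in> K" "x < y"
      using \<open>x < Sup K\<close> less_cSup_iff[of K x] sK bdd[folded K_def] by blast
    then have "x \<in> K"
      using is_interval_connected_component_set[of "Cg g" s, unfolded is_interval_1, rule_format, of s y x]
        sK \<open>s < x\<close> unfolding K_def by simp
    then show ?thesis
      unfolding K_def by (rule Cg_component_const)
  qed
  with sc show "\<forall>\<^sub>F x in at_left (gstar g s). g x = g s"
    unfolding eventually_at_left_field c by blast
qed

lemma g_gstar:
  assumes "continuous (at_left (gstar g s)) g"
    and "bdd_above (connected_component_set (Cg g) s)"
  shows "g (gstar g s) = g s"
proof (cases "s \<in> Cg g")
  case True
  have "(g \<longlongrightarrow> g (gstar g s)) (at_left (gstar g s))"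
    using assms(1) by (simp add: continuous_within)
  moreover have "(g \<longlongrightarrow> g s) (at_left (gstar g s))"
    using eventually_at_left_gstar(2)[OF True assms(2)] by (rule tendsto_eventually)
  ultimately show ?thesis
    by (rule tendsto_unique[OF trivial_limit_at_left_real])
qed (simp add: gstar_def)

lemma bdd_above_component_Cg:
  assumes "s \<le> b" and "b \<notin> Cg g"
  shows "bdd_above (connected_component_set (Cg g) s)"
  using component_Cg_less[OF assms] by (meson bdd_aboveI less_imp_le)

lemma gstar_bounds:
  assumes "s \<le> b" and "b \<notin> Cg g"
  shows "s \<le> gstar g s" and "gstar g s \<le> b"
proof -
  have below_b: "\<And>x. x \<in> connected_component_set (Cg g) s \<Longrightarrow> x \<le> b"
    using component_Cg_less[OF assms] by (simp add: less_imp_le)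
  have bdd: "bdd_above (connected_component_set (Cg g) s)"
    using bdd_above_component_Cg[OF assms] .
  show "s \<le> gstar g s"
    using eventually_at_left_gstar(1)[OF _ bdd] by (cases "s \<in> Cg g") (auto simp: gstar_def)
  show "gstar g s \<le> b"
  proof (cases "s \<in> Cg g")
    case True
    then have "connected_component_set (Cg g) s \<noteq> {}"
      using connected_component_eq_empty by blast
    then have "Sup (connected_component_set (Cg g) s) \<le> b"
      using below_b by (rule cSup_least)
    then show ?thesis
      using True by (simp add: gstar_def)
  qed (simp add: gstar_def assms(1))
qed

lemma g_continuous_at_comp_g_invariant:
  assumes cont: "g_continuous_at g D u t"
    and maps: "\<And>s. s \<in> D \<Longrightarrow> \<phi> s \<in> D"
    and inv: "\<And>s. s \<in> D \<Longrightarrow> g (\<phi> s) = g s"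
  shows "g_continuous_at g D (\<lambda>s. u (\<phi> s)) t"
proof -
  have t: "t \<in> D"
    and eps: "\<And>e. e > 0 \<Longrightarrow> \<exists>d>0. \<forall>s\<in>D. \<bar>g t - g s\<bar> < d \<longrightarrow> norm (u t - u s) < e"
    using cont unfolding g_continuous_at_def by auto
  have "norm (u t - u (\<phi> t)) < e" if "e > 0" for e
    using eps[OF that] maps[OF t] inv[OF t] by fastforce
  from this[of "norm (u t - u (\<phi> t))"] have fixed: "u (\<phi> t) = u t"
    by (metis less_irrefl right_minus_eq zero_less_norm_iff)
  show ?thesis
    unfolding g_continuous_at_def
  proof (intro conjI allI impI t)
    fix e :: real
    assume "e > 0"
    then obtain d where "d > 0" and d: "\<forall>s\<in>D. \<bar>g t - g s\<bar> < d \<longrightarrow> norm (u t - u s) < e"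
      using eps by blast
    show "\<exists>d>0. \<forall>s\<in>D. \<bar>g t - g s\<bar> < d \<longrightarrow> norm (u (\<phi> t) - u (\<phi> s)) < e"
    proof (intro exI[of _ d] conjI ballI impI \<open>d > 0\<close>)
      fix s
      assume "s \<in> D" and "\<bar>g t - g s\<bar> < d"
      then show "norm (u (\<phi> t) - u (\<phi> s)) < e"
        using d maps inv fixed by simp
    qed
  qed
qed

theorem proposition5p1:
  fixes g :: "real \<Rightarrow> real" and f :: "real \<Rightarrow> 'a::real_normed_vector"
    and a b t :: real
  assumes "mono g"
    and "\<And>x. continuous (at_left x) g"
    and "a < b"
    and "a \<notin> Ng_minus g \<union> Dg g"
    and "b \<notin> Dg g \<union> Cg g \<union> Ng_plus g"
    and "t \<in> {a..b}"
    and "g_continuous_at g {a..b} f t"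
  shows "g_continuous_at g {a..b} (\<lambda>s. f (gstar g s)) t"
proof (rule g_continuous_at_comp_g_invariant[OF assms(7)])
  have b: "b \<notin> Cg g"
    using assms(5) by blast
  fix s
  assume "s \<in> {a..b}"
  then have "s \<le> b" and "a \<le> s"
    by auto
  show "gstar g s \<in> {a..b}"
    using gstar_bounds[OF \<open>s \<le> b\<close> b] \<open>a \<le> s\<close> by simp
  show "g (gstar g s) = g s"
    using g_gstar[OF assms(2) bdd_above_component_Cg[OF \<open>s \<le> b\<close> b]] .
qed

end
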